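(* Let $\mathcal{L}$ be a set of points in $\mathrm{PG}(k-1,q)$, identified with one-dimensional vector subspaces (lines through the origin) of $\mathbb{F}_q^k$. Then $\mathcal{L}$ is a strong $(s-1)$-blocking set if and only if the set $B=\bigcup_{\ell\in\mathcal{L}}\ell\subseteq\mathbb{F}_q^k$ is an affine $s$-blocking set.
   Context: $\mathrm{PG}(k-1,q)$ is the projective space whose points, lines, ..., hyperplanes are the $1$-, $2$-, ..., $(k-1)$-dimensional vector subspaces of $\mathbb{F}_q^k$; codimension of a projective subspace equals the codimension of the corresponding vector subspace. For a set $S$ of points, $\langle S\rangle$ is the subspace they span. A strong $t$-blocking set in $\mathrm{PG}(k-1,q)$ is a set of points that meets every codimension-$t$ subspace in a set of points spanning that subspace. An affine $s$-blocking set in $\mathbb{F}_q^k$ is a set of points containing at least one point of every affine subspace (translate of a vector subspace) of dimension $k-s$. *)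

theory Defs
  imports "HOL-Analysis.Analysis"
begin

text \<open>Ambient space: F_q^k is modelled as the type 'a ^ 'n with 'a a finite field
  (q = CARD('a)) and k = CARD('n).\<close>

definition proj_point :: "('a::{finite,field} ^ 'n) set \<Rightarrow> bool" where
  "proj_point l \<longleftrightarrow> vec.subspace l \<and> vec.dim l = 1"

definition codim_subspace :: "nat \<Rightarrow> ('a::{finite,field} ^ 'n) set \<Rightarrow> bool" where
  "codim_subspace t W \<longleftrightarrow> vec.subspace W \<and> t \<le> CARD('n) \<and> vec.dim W = CARD('n) - t"

definition strong_blocking_set :: "nat \<Rightarrow> ('a::{finite,field} ^ 'n) set set \<Rightarrow> bool" where
  "strong_blocking_set t L \<longleftrightarrow>
     (\<forall>W. codim_subspace t W \<longrightarrow> vec.span (\<Union>{l \<in> L. l \<subseteq> W}) = W)"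

definition affine_blocking_set :: "nat \<Rightarrow> ('a::{finite,field} ^ 'n) set \<Rightarrow> bool" where
  "affine_blocking_set s B \<longleftrightarrow>
     (\<forall>(a::'a ^ 'n) V. vec.subspace V \<and> vec.dim V = CARD('n) - s \<longrightarrow>
        (\<exists>v\<in>V. a + v \<in> B))"

end

theory Submission
  imports Defs
begin

text \<open>If V is a hyperplane of W and a \<in> W - V, every vector of W - V has a nonzero
  multiple in the translate a + V. So if the points of L inside a codimension-(s-1)
  subspace W span W, one of them lies outside V and can be scaled into a + V; the
  translates with a \<in> V are V itself and contain 0. Conversely, if the points of L inside
  W span only a proper subspace U, choose the hyperplane V \<supseteq> U: a point of L in a + V is
  nonzero and lies in W, so its whole line lies in W, hence in U \<subseteq> V, contradicting a \<notin> V.\<close>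

lemma (in vector_space) subspace_meets_translate:
  assumes "subspace V" "subspace l" "x \<in> l" "x \<in> span (insert a V)" "x \<notin> V"
  shows "\<exists>v\<in>V. a + v \<in> l"
proof -
  obtain c where c: "x - scale c a \<in> V"
    using assms(1,4) span_breakdown_eq span_eq_iff by metis
  have "c \<noteq> 0" using c assms(5) by auto
  have "scale (inverse c) (x - scale c a) \<in> V" using assms(1) c subspace_scale by blast
  moreover have "a + scale (inverse c) (x - scale c a) = scale (inverse c) x"
    using \<open>c \<noteq> 0\<close> by (simp add: scale_right_diff_distrib)
  moreover have "scale (inverse c) x \<in> l" using assms(2,3) subspace_scale by blast
  ultimately show ?thesis by metis
qed

lemma (in finite_dimensional_vector_space) exists_hyperplane_between:
  assumes "subspace U" "subspace W" "U \<subset> W"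
  obtains V a where "subspace V" "U \<subseteq> V" "V \<subseteq> W" "a \<in> W" "a \<notin> V" "dim W = dim V + 1"
proof -
  obtain B where B: "B \<subseteq> U" "independent B" "U \<subseteq> span B"
    using basis_exists[of U] by metis
  obtain C where C: "B \<subseteq> C" "C \<subseteq> W" "independent C" "W \<subseteq> span C"
    using maximal_independent_subset_extend[of B W] B assms(3) by (metis order.trans psubsetE)
  have "\<not> C \<subseteq> B"
  proof
    assume "C \<subseteq> B"
    then have "W \<subseteq> U" using C(4) B(1) assms(1) span_mono span_minimal by blast
    then show False using assms(3) by blast
  qed
  then obtain a where a: "a \<in> C" "a \<notin> B" by blast
  define V where "V = span (C - {a})"
  show thesis
  proof
    show "subspace V" unfolding V_def by (rule subspace_span)
    have "B \<subseteq> C - {a}" using C(1) a(2) by blast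
    then have "span B \<subseteq> V" unfolding V_def by (rule span_mono)
    with B(3) show "U \<subseteq> V" by (rule order_trans)
    show "V \<subseteq> W" unfolding V_def using C(2) assms(2) by (intro span_minimal) auto
    show "a \<in> W" using C(2) a(1) by blast
    show "a \<notin> V" unfolding V_def using C(3) a(1) by (auto simp: dependent_def)
    have "finite C" using C(3) finiteI_independent by blast
    have "dim W = card C" using basis_card_eq_dim[OF C(2,4,3)] by simp
    moreover have "independent (C - {a})" using C(3) by (rule independent_mono) blast
    then have "dim V = card (C - {a})" unfolding V_def by (rule dim_span_eq_card_independent)
    ultimately show "dim W = dim V + 1"
      using card_Suc_Diff1[OF \<open>finite C\<close> a(1)] by simp
  qed
qed

lemma proj_point_eq_span:
  fixes l :: "('a::{finite,field} ^ 'n) set"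
  assumes "proj_point l" "y \<in> l" "y \<noteq> 0"
  shows "l = vec.span {y}"
proof -
  have "vec.span {y} = vec.span l"
    using assms by (intro vec.dim_eq_span) (auto simp: proj_point_def)
  then show ?thesis using assms vec.span_eq_iff unfolding proj_point_def by metis
qed

lemma strong_blocking_set_imp_affine_blocking_set:
  fixes L :: "('a::{finite,field} ^ 'n) set set"
  assumes "1 \<le> s" "s \<le> CARD('n)" "\<forall>l\<in>L. proj_point l"
    and "strong_blocking_set (s - 1) L"
  shows "affine_blocking_set s (\<Union>L)"
  unfolding affine_blocking_set_def
proof (intro allI impI)
  fix a :: "'a ^ 'n" and V :: "('a ^ 'n) set"
  assume V: "vec.subspace V \<and> vec.dim V = CARD('n) - s"
  have hits_outside: "\<exists>v\<in>V. b + v \<in> \<Union>L" if "b \<notin> V" for b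
  proof -
    define W where "W = vec.span (insert b V)"
    have "b \<notin> vec.span V" using V that vec.span_eq_iff by metis
    then have "vec.dim W = vec.dim V + 1" unfolding W_def by (simp add: vec.dim_insert)
    then have "codim_subspace (s - 1) W"
      unfolding codim_subspace_def W_def using V assms(1,2) by auto
    then have spanned: "vec.span (\<Union>{l \<in> L. l \<subseteq> W}) = W"
      using assms(4) unfolding strong_blocking_set_def by blast
    have "\<not> \<Union>{l \<in> L. l \<subseteq> W} \<subseteq> V"
    proof
      assume "\<Union>{l \<in> L. l \<subseteq> W} \<subseteq> V"
      then have "W \<subseteq> V" using spanned V vec.span_minimal by metis
      moreover have "b \<in> W" unfolding W_def by (simp add: vec.span_base)
      ultimately show False using that by blast
    qed
    then obtain l x where "l \<in> L" "l \<subseteq> W" "x \<in> l" "x \<notin> V" by blast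
    then have "\<exists>v\<in>V. b + v \<in> l"
      using V assms(3) vec.subspace_meets_translate[of V l x b]
      unfolding proj_point_def W_def by blast
    then show ?thesis using \<open>l \<in> L\<close> by blast
  qed
  show "\<exists>v\<in>V. a + v \<in> \<Union>L"
  proof (cases "a \<in> V")
    case True
    have "vec.dim (UNIV :: ('a ^ 'n) set) = CARD('n)" by (simp add: card_cart_basis)
    then have "V \<noteq> UNIV" using V assms(1,2) by auto
    then obtain l where "l \<in> L" using hits_outside by blast
    then have "a + - a \<in> \<Union>L" using assms(3) vec.subspace_0 unfolding proj_point_def by auto
    moreover have "- a \<in> V" using True V vec.subspace_neg by blast
    ultimately show ?thesis by blast
  next
    case False
    then show ?thesis by (rule hits_outside)
  qed
qed

lemma affine_blocking_set_imp_strong_blocking_set: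
  fixes L :: "('a::{finite,field} ^ 'n) set set"
  assumes "1 \<le> s" "s \<le> CARD('n)" "\<forall>l\<in>L. proj_point l"
    and "affine_blocking_set s (\<Union>L)"
  shows "strong_blocking_set (s - 1) L"
  unfolding strong_blocking_set_def
proof (intro allI impI)
  fix W :: "('a ^ 'n) set"
  assume "codim_subspace (s - 1) W"
  then have W: "vec.subspace W" "vec.dim W = CARD('n) - s + 1"
    using assms(1,2) unfolding codim_subspace_def by auto
  define U where "U = vec.span (\<Union>{l \<in> L. l \<subseteq> W})"
  have "U \<subseteq> W" unfolding U_def using W(1) by (intro vec.span_minimal) auto
  show "U = W"
  proof (rule ccontr)
    assume "U \<noteq> W"
    then obtain V a where V: "vec.subspace V" "U \<subseteq> V" "V \<subseteq> W" "a \<in> W" "a \<notin> V"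
        "vec.dim W = vec.dim V + 1"
      using vec.exists_hyperplane_between[of U W] \<open>U \<subseteq> W\<close> W(1) unfolding U_def by auto
    then obtain v l where v: "v \<in> V" "l \<in> L" "a + v \<in> l"
      using assms(4) W(2) unfolding affine_blocking_set_def by fastforce
    have "a + v \<notin> V" using V(1,5) v(1) vec.subspace_diff by fastforce
    then have "l = vec.span {a + v}"
      using V(1) vec.subspace_0 proj_point_eq_span assms(3) v(2,3) by metis
    moreover have "a + v \<in> W" using V(3,4) v(1) W(1) vec.subspace_add by blast
    ultimately have "l \<subseteq> W" using W(1) by (simp add: vec.span_minimal)
    then have "l \<subseteq> \<Union>{l \<in> L. l \<subseteq> W}" using v(2) by blast
    then have "l \<subseteq> U" unfolding U_def using vec.span_superset by (rule order_trans)
    then have "a + v \<in> V" using V(2) v(3) by blast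
    with \<open>a + v \<notin> V\<close> show False by contradiction
  qed
qed

theorem lemma1p2:
  fixes L :: "('a::{finite,field} ^ 'n) set set"
  assumes "1 \<le> s" and "s \<le> CARD('n)"
    and "\<forall>l\<in>L. proj_point l"
  shows "strong_blocking_set (s - 1) L \<longleftrightarrow> affine_blocking_set s (\<Union>L)"
  using assms strong_blocking_set_imp_affine_blocking_set
    affine_blocking_set_imp_strong_blocking_set by blast

end
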